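(* Assume (A1). Let $\delta>0$, $\beta>0$, and $\mathcal R=\{r_1,\dots,r_m\}$ with positive integers $r_1<\dots<r_m\le t$. Suppose the event $E$ described in the context holds. Then for every $1\le k\le m-1$, $$\lVert\hat{\bm C}^{[r_k]}(t)-\hat{\bm C}^{[r_{k+1}]}(t)\rVert_\infty>\mathcal T(k)\ \Longrightarrow\ \sum_{u=t-r_{k+1}+1}^{t-1}\lVert\bm C(u)-\bm C(u+1)\rVert_\infty>\frac{A_{\delta,n,m}\,\beta}{\sqrt{r_k}}.$$
   Context: For matrices $\lVert\bm M\rVert_\infty=\max_{i,j}|M_{ij}|$. Let $\ell_1,\dots,\ell_n:\mathbb{R}^d\to\{-1,1\}$ be functions and $X_1,X_2,\dots$ random inputs with $X_k\sim D_k$; (A1): for every finite $t$, $(X_1,\dots,X_t)\sim\prod_{k=1}^tD_k$. Correlation matrix $C_{ij}(k)=\mathbb{E}_{X\sim D_k}[\ell_i(X)\ell_j(X)]$; $\bm C^{[r]}(t)=\frac1r\sum_{k=t-r+1}^t\bm C(k)$; $\hat{\bm C}^{[r]}(t)=\frac1r\sum_{k=t-r+1}^t\bm v_k\bm v_k^T$ with $\bm v_k=(\ell_1(X_k),\dots,\ell_n(X_k))^T$. Let $A_{\delta,n,m}=\sqrt{2\ln[(2m-1)n(n-1)/\delta]}$ and, for $k\le m-1$, $\mathcal T(k)=\frac{2\beta A_{\delta,n,m}}{\sqrt{r_k}}+A_{\delta,n,m}\sqrt{\frac{1-r_k/r_{k+1}}{r_k}}$. The event $E$: for all $k\le m$,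 $\lVert\bm C(t)-\hat{\bm C}^{[r_k]}(t)\rVert_\infty\le\frac{A_{\delta,n,m}}{\sqrt{r_k}}+\lVert\bm C(t)-\bm C^{[r_k]}(t)\rVert_\infty$, and for all $k\le m-1$, $\lVert\bm C^{[r_k]}(t)-\bm C^{[r_{k+1}]}(t)-\hat{\bm C}^{[r_k]}(t)+\hat{\bm C}^{[r_{k+1}]}(t)\rVert_\infty\le A_{\delta,n,m}\sqrt{\frac{1-r_k/r_{k+1}}{r_k}}$. *)

theory Defs
  imports "HOL-Probability.Probability"
begin

text \<open>n x n matrices are represented as functions nat => nat => real, indexed by 1..n.\<close>

definition supnorm :: "nat \<Rightarrow> (nat \<Rightarrow> nat \<Rightarrow> real) \<Rightarrow> real" where
  "supnorm n M = Max {\<bar>M i j\<bar> | i j. i \<in> {1..n} \<and> j \<in> {1..n}}"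

definition mdiff :: "(nat \<Rightarrow> nat \<Rightarrow> real) \<Rightarrow> (nat \<Rightarrow> nat \<Rightarrow> real) \<Rightarrow> (nat \<Rightarrow> nat \<Rightarrow> real)" where
  "mdiff M N = (\<lambda>i j. M i j - N i j)"

definition Cmat :: "(nat \<Rightarrow> (real ^ 'd) measure) \<Rightarrow> (nat \<Rightarrow> real ^ 'd \<Rightarrow> real) \<Rightarrow> nat \<Rightarrow> nat \<Rightarrow> nat \<Rightarrow> real"
  where "Cmat D l k = (\<lambda>i j. LINT x|D k. l i x * l j x)"

definition Cavg :: "(nat \<Rightarrow> (real ^ 'd) measure) \<Rightarrow> (nat \<Rightarrow> real ^ 'd \<Rightarrow> real) \<Rightarrow> nat \<Rightarrow> nat \<Rightarrow> nat \<Rightarrow> nat \<Rightarrow> real"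
  where "Cavg D l r t = (\<lambda>i j. (1 / real r) * (\<Sum>k\<in>{t - r + 1..t}. Cmat D l k i j))"

text \<open>Empirical windowed average hat C^[r](t) for a realisation x of the inputs (x k = X_k).\<close>
definition Chat :: "(nat \<Rightarrow> real ^ 'd \<Rightarrow> real) \<Rightarrow> (nat \<Rightarrow> real ^ 'd) \<Rightarrow> nat \<Rightarrow> nat \<Rightarrow> nat \<Rightarrow> nat \<Rightarrow> real"
  where "Chat l x r t = (\<lambda>i j. (1 / real r) * (\<Sum>k\<in>{t - r + 1..t}. l i (x k) * l j (x k)))"

definition Aconst :: "real \<Rightarrow> nat \<Rightarrow> nat \<Rightarrow> real" where
  "Aconst \<delta> n m = sqrt (2 * ln ((2 * real m - 1) * real n * (real n - 1) / \<delta>))"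

definition Tthr :: "real \<Rightarrow> real \<Rightarrow> nat \<Rightarrow> nat \<Rightarrow> (nat \<Rightarrow> nat) \<Rightarrow> nat \<Rightarrow> real" where
  "Tthr \<beta> \<delta> n m r k =
     2 * \<beta> * Aconst \<delta> n m / sqrt (real (r k))
     + Aconst \<delta> n m * sqrt ((1 - real (r k) / real (r (k+1))) / real (r k))"

definition eventE :: "real \<Rightarrow> nat \<Rightarrow> nat \<Rightarrow> (nat \<Rightarrow> nat) \<Rightarrow> nat \<Rightarrow>
    (nat \<Rightarrow> (real ^ 'd) measure) \<Rightarrow> (nat \<Rightarrow> real ^ 'd \<Rightarrow> real) \<Rightarrow> (nat \<Rightarrow> real ^ 'd) \<Rightarrow> bool" where
  "eventE \<delta> n m r t D l x \<longleftrightarrow>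
     (\<forall>k\<in>{1..m}. supnorm n (mdiff (Cmat D l t) (Chat l x (r k) t))
        \<le> Aconst \<delta> n m / sqrt (real (r k)) + supnorm n (mdiff (Cmat D l t) (Cavg D l (r k) t))) \<and>
     (\<forall>k\<in>{1..m-1}. supnorm n (\<lambda>i j. Cavg D l (r k) t i j - Cavg D l (r (k+1)) t i j
                                   - Chat l x (r k) t i j + Chat l x (r (k+1)) t i j)
        \<le> Aconst \<delta> n m * sqrt ((1 - real (r k) / real (r (k+1))) / real (r k)))"

end

theory Submission
  imports Defs
begin

(* On the event E the empirical averages track the true windowed averages up to the noise term,
   so ||Chat^[r_k] - Chat^[r_(k+1)]|| <= ||C^[r_k] - C^[r_(k+1)]|| + A sqrt((1 - r_k/r_(k+1))/r_k).
   Two averages of C over nested windows differ by at most the largest difference between two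
   matrices C(u), C(v) of the longer window, and this telescopes into the variation
   sum ||C(u) - C(u+1)||. Exceeding the threshold T(k) thus forces the variation above 2 beta A/sqrt r_k.
   The argument is pathwise: only the second half of E is used, not the distributional hypotheses. *)

lemma abs_diff_le_sum_abs_increments:
  fixes f :: "nat \<Rightarrow> real"
  assumes "a \<le> u" "u \<le> b" "a \<le> v" "v \<le> b"
  shows "\<bar>f u - f v\<bar> \<le> (\<Sum>w\<in>{a..<b}. \<bar>f w - f (w + 1)\<bar>)"
proof -
  have ordered: "\<bar>f x - f y\<bar> \<le> (\<Sum>w\<in>{a..<b}. \<bar>f w - f (w + 1)\<bar>)"
    if "a \<le> x" "x \<le> y" "y \<le> b" for x y
  proof -
    have "\<bar>f x - f y\<bar> = \<bar>\<Sum>w\<in>{x..<y}. f (Suc w) - f w\<bar>"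
      using that by (simp add: sum_Suc_diff' abs_minus_commute)
    also have "\<dots> \<le> (\<Sum>w\<in>{x..<y}. \<bar>f (Suc w) - f w\<bar>)"
      by (rule sum_abs)
    also have "\<dots> = (\<Sum>w\<in>{x..<y}. \<bar>f w - f (w + 1)\<bar>)"
      by (simp add: abs_minus_commute)
    also have "\<dots> \<le> (\<Sum>w\<in>{a..<b}. \<bar>f w - f (w + 1)\<bar>)"
      using that by (intro sum_mono2) auto
    finally show ?thesis .
  qed
  show ?thesis
  proof (cases "u \<le> v")
    case True
    then show ?thesis using ordered assms by blast
  next
    case False
    then show ?thesis using ordered[of v u] assms by (simp add: abs_minus_commute)
  qed
qed

lemma abs_mean_minus_le:
  fixes f :: "'a \<Rightarrow> real"
  assumes "finite A" "A \<noteq> {}" "\<And>x. x \<in> A \<Longrightarrow> \<bar>f x - c\<bar> \<le> S"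
  shows "\<bar>sum f A / card A - c\<bar> \<le> S"
proof -
  have card_pos: "real (card A) > 0"
    using assms by (simp add: card_gt_0_iff)
  have "\<bar>sum f A / card A - c\<bar> = \<bar>\<Sum>x\<in>A. f x - c\<bar> / card A"
    using card_pos by (simp add: sum_subtractf abs_divide field_simps)
  also have "\<dots> \<le> (\<Sum>x\<in>A. \<bar>f x - c\<bar>) / card A"
    by (intro divide_right_mono sum_abs) simp
  also have "\<dots> \<le> S"
    using card_pos sum_bounded_above[of A "\<lambda>x. \<bar>f x - c\<bar>" S] assms(3)
    by (simp add: divide_le_eq mult.commute)
  finally show ?thesis .
qed

lemma abs_mean_diff_le:
  fixes f g :: "'a \<Rightarrow> real"
  assumes "finite A" "A \<noteq> {}" "finite B" "B \<noteq> {}"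
    and "\<And>u v. u \<in> A \<Longrightarrow> v \<in> B \<Longrightarrow> \<bar>f u - g v\<bar> \<le> S"
  shows "\<bar>sum f A / card A - sum g B / card B\<bar> \<le> S"
proof (rule abs_mean_minus_le)
  fix u
  assume "u \<in> A"
  then have "\<bar>sum g B / card B - f u\<bar> \<le> S"
    using assms by (intro abs_mean_minus_le) (auto simp: abs_minus_commute)
  then show "\<bar>f u - sum g B / card B\<bar> \<le> S"
    by (simp add: abs_minus_commute)
qed (use assms in auto)

lemma abs_window_mean_diff_le:
  fixes f :: "nat \<Rightarrow> real"
  assumes "0 < r" "r \<le> R" "R \<le> t"
  shows "\<bar>(1 / real r) * (\<Sum>u\<in>{t-r+1..t}. f u) - (1 / real R) * (\<Sum>u\<in>{t-R+1..t}. f u)\<bar>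
          \<le> (\<Sum>w\<in>{t-R+1..t-1}. \<bar>f w - f (w + 1)\<bar>)"
proof -
  have "{t-R+1..t-1} = {t-R+1..<t}"
    using assms by auto
  moreover have "\<bar>f u - f v\<bar> \<le> (\<Sum>w\<in>{t-R+1..<t}. \<bar>f w - f (w + 1)\<bar>)"
    if "u \<in> {t-r+1..t}" "v \<in> {t-R+1..t}" for u v
    using that assms by (intro abs_diff_le_sum_abs_increments) auto
  then have "\<bar>sum f {t-r+1..t} / card {t-r+1..t} - sum f {t-R+1..t} / card {t-R+1..t}\<bar>
      \<le> (\<Sum>w\<in>{t-R+1..<t}. \<bar>f w - f (w + 1)\<bar>)"
    using assms by (intro abs_mean_diff_le) auto
  moreover have "card {t-r+1..t} = r" "card {t-R+1..t} = R"
    using assms by auto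
  ultimately show ?thesis
    by simp
qed

lemma supnorm_eq_Max_image:
  "supnorm n M = Max ((\<lambda>(i, j). \<bar>M i j\<bar>) ` ({1..n} \<times> {1..n}))"
  unfolding supnorm_def by (rule arg_cong[where f = Max]) fastforce

lemma abs_le_supnorm:
  assumes "i \<in> {1..n}" "j \<in> {1..n}"
  shows "\<bar>M i j\<bar> \<le> supnorm n M"
  unfolding supnorm_eq_Max_image using assms by (intro Max_ge) auto

lemma supnorm_le:
  assumes "1 \<le> n" "\<And>i j. i \<in> {1..n} \<Longrightarrow> j \<in> {1..n} \<Longrightarrow> \<bar>M i j\<bar> \<le> c"
  shows "supnorm n M \<le> c"
  unfolding supnorm_eq_Max_image using assms by (subst Max_le_iff) auto

lemma supnorm_nonneg:
  assumes "1 \<le> n"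
  shows "0 \<le> supnorm n M"
proof -
  have "\<bar>M 1 1\<bar> \<le> supnorm n M"
    using assms by (intro abs_le_supnorm) auto
  then show ?thesis
    by linarith
qed

lemma supnorm_diff_le:
  assumes "1 \<le> n"
  shows "supnorm n (\<lambda>i j. M i j - N i j) \<le> supnorm n M + supnorm n N"
proof (rule supnorm_le[OF assms])
  fix i j
  assume "i \<in> {1..n}" "j \<in> {1..n}"
  then have "\<bar>M i j\<bar> \<le> supnorm n M" "\<bar>N i j\<bar> \<le> supnorm n N"
    by (simp_all add: abs_le_supnorm)
  then show "\<bar>M i j - N i j\<bar> \<le> supnorm n M + supnorm n N"
    by linarith
qed

lemma supnorm_window_mean_diff_le:
  fixes C :: "nat \<Rightarrow> nat \<Rightarrow> nat \<Rightarrow> real"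
  assumes "1 \<le> n" "0 < r" "r \<le> R" "R \<le> t"
  shows "supnorm n (\<lambda>i j. (1 / real r) * (\<Sum>k\<in>{t-r+1..t}. C k i j) - (1 / real R) * (\<Sum>k\<in>{t-R+1..t}. C k i j))
          \<le> (\<Sum>u\<in>{t-R+1..t-1}. supnorm n (mdiff (C u) (C (u + 1))))"
proof (rule supnorm_le[OF assms(1)])
  fix i j
  assume ij: "i \<in> {1..n}" "j \<in> {1..n}"
  have "\<bar>(1 / real r) * (\<Sum>k\<in>{t-r+1..t}. C k i j) - (1 / real R) * (\<Sum>k\<in>{t-R+1..t}. C k i j)\<bar>
      \<le> (\<Sum>u\<in>{t-R+1..t-1}. \<bar>C u i j - C (u + 1) i j\<bar>)"
    using assms by (intro abs_window_mean_diff_le) auto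
  also have "\<dots> \<le> (\<Sum>u\<in>{t-R+1..t-1}. supnorm n (mdiff (C u) (C (u + 1))))"
    using abs_le_supnorm[OF ij] by (intro sum_mono) (simp add: mdiff_def)
  finally show "\<bar>(1 / real r) * (\<Sum>k\<in>{t-r+1..t}. C k i j) - (1 / real R) * (\<Sum>k\<in>{t-R+1..t}. C k i j)\<bar>
      \<le> (\<Sum>u\<in>{t-R+1..t-1}. supnorm n (mdiff (C u) (C (u + 1))))" .
qed

lemma supnorm_Chat_diff_le:
  assumes "1 \<le> n" "0 < r" "r \<le> R" "R \<le> t"
  shows "supnorm n (mdiff (Chat l x r t) (Chat l x R t))
    \<le> (\<Sum>u\<in>{t-R+1..t-1}. supnorm n (mdiff (Cmat D l u) (Cmat D l (u + 1))))
      + supnorm n (\<lambda>i j. Cavg D l r t i j - Cavg D l R t i j - Chat l x r t i j + Chat l x R t i j)"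
    (is "_ \<le> ?S + supnorm n ?noise")
proof -
  have "mdiff (Chat l x r t) (Chat l x R t)
      = (\<lambda>i j. mdiff (Cavg D l r t) (Cavg D l R t) i j - ?noise i j)"
    by (simp add: mdiff_def fun_eq_iff)
  then have "supnorm n (mdiff (Chat l x r t) (Chat l x R t))
      \<le> supnorm n (mdiff (Cavg D l r t) (Cavg D l R t)) + supnorm n ?noise"
    using supnorm_diff_le assms(1) by simp
  also have "supnorm n (mdiff (Cavg D l r t) (Cavg D l R t)) \<le> ?S"
    using supnorm_window_mean_diff_le[of n r R t "Cmat D l"] assms
    by (simp add: mdiff_def Cavg_def)
  finally show ?thesis
    by simp
qed

theorem proposition8:
  fixes M :: "'w measure"
    and X :: "nat \<Rightarrow> 'w \<Rightarrow> real ^ 'd"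
    and D :: "nat \<Rightarrow> (real ^ 'd) measure"
    and l :: "nat \<Rightarrow> real ^ 'd \<Rightarrow> real"
    and n m t :: nat and r :: "nat \<Rightarrow> nat"
    and \<delta> \<beta> :: real and \<omega> :: 'w
  assumes n2: "n \<ge> 2"
    and l_pm1: "\<And>i x. i \<in> {1..n} \<Longrightarrow> l i x \<in> {-1, 1}"
    and l_meas: "\<And>i. i \<in> {1..n} \<Longrightarrow> l i \<in> borel_measurable borel"
    and M_prob: "prob_space M"
    and D_prob: "\<And>k. prob_space (D k)"
    and D_sets: "\<And>k. sets (D k) = sets borel"
    and X_meas: "\<And>k. X k \<in> measurable M borel"
    and A1: "\<And>s. distr M (PiM {1..s} (\<lambda>_. borel)) (\<lambda>w. \<lambda>k\<in>{1..s}. X k w) = PiM {1..s} D"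
    and \<delta>_pos: "\<delta> > 0" and \<beta>_pos: "\<beta> > 0"
    and r_pos: "r 1 > 0"
    and r_mono: "\<And>k. k \<in> {1..<m} \<Longrightarrow> r k < r (k+1)"
    and r_le_t: "r m \<le> t"
    and \<omega>_in: "\<omega> \<in> space M"
    and E: "eventE \<delta> n m r t D l (\<lambda>k. X k \<omega>)"
    and k: "1 \<le> k" "k \<le> m - 1"
  shows "supnorm n (mdiff (Chat l (\<lambda>k. X k \<omega>) (r k) t) (Chat l (\<lambda>k. X k \<omega>) (r (k+1)) t)) > Tthr \<beta> \<delta> n m r k
     \<Longrightarrow> (\<Sum>u\<in>{t - r (k+1) + 1..t - 1}. supnorm n (mdiff (Cmat D l u) (Cmat D l (u+1))))
         > Aconst \<delta> n m * \<beta> / sqrt (real (r k))"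
proof -
  assume gap: "supnorm n (mdiff (Chat l (\<lambda>k. X k \<omega>) (r k) t) (Chat l (\<lambda>k. X k \<omega>) (r (k+1)) t))
    > Tthr \<beta> \<delta> n m r k"
  let ?A = "Aconst \<delta> n m"
  let ?S = "\<Sum>u\<in>{t - r (k+1) + 1..t - 1}. supnorm n (mdiff (Cmat D l u) (Cmat D l (u+1)))"
  have r_le: "r a \<le> r b" if "1 \<le> a" "a \<le> b" "b \<le> m" for a b
  proof (rule lift_Suc_mono_le_ivl[where f = r and N = "{1..<m}"])
    show "r i \<le> r (Suc i)" if "i \<in> {1..<m}" for i
      using r_mono[OF that] by simp
  qed (use that in auto)
  have k_lt: "k < m"
    using k by linarith
  have r_k: "0 < r k" "r k < r (k+1)" "r (k+1) \<le> t"
    using r_pos r_le[of 1 k] r_mono[of k] r_le[of "k+1" m] r_le_t k k_lt by auto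
  have "supnorm n (mdiff (Chat l (\<lambda>k. X k \<omega>) (r k) t) (Chat l (\<lambda>k. X k \<omega>) (r (k+1)) t))
      \<le> ?S + supnorm n (\<lambda>i j. Cavg D l (r k) t i j - Cavg D l (r (k+1)) t i j
                          - Chat l (\<lambda>k. X k \<omega>) (r k) t i j + Chat l (\<lambda>k. X k \<omega>) (r (k+1)) t i j)"
    using n2 r_k by (intro supnorm_Chat_diff_le) auto
  also have "\<dots> \<le> ?S + ?A * sqrt ((1 - real (r k) / real (r (k+1))) / real (r k))"
    using E k k_lt unfolding eventE_def by simp
  finally have gap_S: "2 * \<beta> * ?A / sqrt (real (r k)) < ?S"
    using gap unfolding Tthr_def by linarith
  show "?S > ?A * \<beta> / sqrt (real (r k))"
    \<comment> \<open>Isabelle's sqrt is odd, so A is negative when the argument of ln is below 1.\<close>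
  proof (cases "0 \<le> ?A")
    case True
    then have "?A * \<beta> / sqrt (real (r k)) \<le> 2 * \<beta> * ?A / sqrt (real (r k))"
      using \<beta>_pos by (intro divide_right_mono) simp_all
    with gap_S show ?thesis
      by linarith
  next
    case False
    then have "?A * \<beta> / sqrt (real (r k)) < 0"
      using \<beta>_pos r_k by (simp add: mult_neg_pos divide_neg_pos)
    moreover have "0 \<le> ?S"
      using n2 by (intro sum_nonneg supnorm_nonneg) auto
    ultimately show ?thesis
      by linarith
  qed
qed

end
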